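(* Fix a horizon $T\in\mathbb{N}$, demands $D_1,\dots,D_T\in\mathbb{R}$, prices $\lambda_1,\dots,\lambda_T\ge 0$, a degradation cost $c\ge 0$, power limit $\overline{P}>0$, energy limits $0\le \underline{E}\le \overline{E}$, efficiency $\eta\in(0,1]$ and an initial state of charge $e_1\in[\underline{E},\overline{E}]$. Let $S$ denote the set of $(p,d,q,e)$ with $p\in\mathbb{R}$, $d,q\in\mathbb{R}^T$, $e=(e_2,\dots,e_{T+1})\in\mathbb{R}^T$ satisfying, for all $t=1,\dots,T$: $$p\ge D_t-d_t+q_t,\qquad e_{t+1}=e_t-d_t/\eta+\eta q_t,\qquad 0\le d_t,q_t\le \overline{P},\qquad \underline{E}\le e_{t+1}\le \overline{E},$$ and assume $S\neq\emptyset$. Combined problem: for a peak-demand charge $\kappa>0$, $$\min_{(p,d,q,e)\in S}\ \sum_{t=1}^T\big[c\,d_t+\lambda_t(D_t-d_t+q_t)\big]+\kappa p.$$ Stage 1 (peak shaving): for $\delta>0$, $$\min_{(p,d,q,e)\in S}\ p+\delta\sum_{t=1}^T e_{t+1},$$ with an optimal solution $(p^*,d^*,q^*,e^* )$. Stage 2 (arbitrage): given $(p^*,e^* )$, $$\min_{d,q,e}\ \sum_{t=1}^T\big[c\,d_t-\lambda_t(d_t-q_t)\big]$$ subject to $p^*\ge D_t-d_t+q_t$, $e_{t+1}\ge e^*_{t+1}$, $e_{t+1}=e_t-d_t/\eta+\eta q_t$, $0\le d_t,q_t\le\overline{P}$, $\underline{E}\le e_{t+1}\le\overline{E}$ for all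 $t=1,\dots,T$. Claim: if $\delta>0$ is sufficiently small and $\kappa$ is sufficiently large relative to $c$ and the $\lambda_t$, then solving Stage 1 followed by Stage 2 is equivalent to solving the combined problem; that is, the optimal peak of the combined problem equals $p^*$, and for any optimal solution $(d,q,e)$ of Stage 2, the point $(p^*,d,q,e)$ is an optimal solution of the combined problem, with combined optimal value equal to $\sum_{t=1}^T\lambda_tD_t+\kappa p^*+(\text{optimal value of Stage 2})$.
   Context: This models a behind-the-meter battery in a building: $d_t$ and $q_t$ are the discharge and charge energy in timestep $t$, $e_{t+1}$ is the state of charge after timestep $t$, $p$ is the peak net demand over the horizon, $D_t-d_t+q_t$ is the net demand in timestep $t$, $\kappa$ is the peak demand charge, $\lambda_t$ the real-time energy price and $c$ the per-unit battery degradation cost. The term $\delta\sum_t e_{t+1}$ in Stage 1 is a small tie-breaking term selecting a low state-of-charge trajectory among peak-minimizing solutions. *)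

theory Defs
  imports Complex_Main
begin

type_synonym point = "real \<times> (nat \<Rightarrow> real) \<times> (nat \<Rightarrow> real) \<times> (nat \<Rightarrow> real)"
type_synonym point2 = "(nat \<Rightarrow> real) \<times> (nat \<Rightarrow> real) \<times> (nat \<Rightarrow> real)"

text \<open>Vectors indexed by t = 1..T are functions nat => real; the state of charge
  after timestep t is e (Suc t); the initial state of charge e_1 is the fixed
  parameter e1 (the value e 1 of the decision vector is irrelevant).\<close>

definition prev_soc :: "real \<Rightarrow> (nat \<Rightarrow> real) \<Rightarrow> nat \<Rightarrow> real" where
  "prev_soc e1 e t = (if t = 1 then e1 else e t)"

definition feasS ::
  "nat \<Rightarrow> (nat \<Rightarrow> real) \<Rightarrow> real \<Rightarrow> real \<Rightarrow> real \<Rightarrow> real \<Rightarrow> real \<Rightarrow> point set" where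
  "feasS T D Pmax Elo Ehi eta e1 =
     {(p, d, q, e). \<forall>t\<in>{1..T}.
        p \<ge> D t - d t + q t \<and>
        e (Suc t) = prev_soc e1 e t - d t / eta + eta * q t \<and>
        0 \<le> d t \<and> d t \<le> Pmax \<and> 0 \<le> q t \<and> q t \<le> Pmax \<and>
        Elo \<le> e (Suc t) \<and> e (Suc t) \<le> Ehi}"

definition stage2_feas ::
  "nat \<Rightarrow> (nat \<Rightarrow> real) \<Rightarrow> real \<Rightarrow> real \<Rightarrow> real \<Rightarrow> real \<Rightarrow> real \<Rightarrow> real \<Rightarrow> (nat \<Rightarrow> real) \<Rightarrow> point2 set" where
  "stage2_feas T D Pmax Elo Ehi eta e1 pstar estar =
     {(d, q, e). (pstar, d, q, e) \<in> feasS T D Pmax Elo Ehi eta e1 \<and>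
        (\<forall>t\<in>{1..T}. e (Suc t) \<ge> estar (Suc t))}"

definition combined_obj ::
  "nat \<Rightarrow> real \<Rightarrow> (nat \<Rightarrow> real) \<Rightarrow> (nat \<Rightarrow> real) \<Rightarrow> real \<Rightarrow> point \<Rightarrow> real" where
  "combined_obj T c lam D kappa x = (case x of (p, d, q, e) \<Rightarrow>
     (\<Sum>t = 1..T. c * d t + lam t * (D t - d t + q t)) + kappa * p)"

definition stage1_obj :: "nat \<Rightarrow> real \<Rightarrow> point \<Rightarrow> real" where
  "stage1_obj T delta x = (case x of (p, d, q, e) \<Rightarrow> p + delta * (\<Sum>t = 1..T. e (Suc t)))"

definition stage2_obj :: "nat \<Rightarrow> real \<Rightarrow> (nat \<Rightarrow> real) \<Rightarrow> point2 \<Rightarrow> real" where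
  "stage2_obj T c lam y = (case y of (d, q, e) \<Rightarrow> (\<Sum>t = 1..T. c * d t - lam t * (d t - q t)))"

definition is_min :: "'a set \<Rightarrow> ('a \<Rightarrow> real) \<Rightarrow> 'a \<Rightarrow> bool" where
  "is_min A f x \<longleftrightarrow> x \<in> A \<and> (\<forall>y\<in>A. f x \<le> f y)"

end

theory Submission
  imports Defs "HOL-Analysis.Analysis"
begin

text \<open>A schedule is determined, up to cost, by its state-of-charge path: for a peak bound p, a path
  starting at e1 and staying within [Elo, Ehi] is realisable iff every increment lies between
  -Pmax/eta and a bound depending on p, and the cheapest stage-2 cost of an increment x is a
  piecewise linear function of x, attained by only charging or only discharging.

  Pointwise minima of paths realisable for
  the same peak are realisable, so a stage-1 optimum has the pointwise lowest state of charge
  among schedules with its peak. And a path realisable for peak p can be moved to one realisable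
  for any attainable lower peak p', changing each value by at most T (p - p') / eta. Hence
  lowering the peak by h raises the stage-1 charge term by at most delta T^2 h / eta < h when
  delta T^2 < eta, so the stage-1 optimum has the minimal peak p*; and every schedule of peak p
  yields a stage-2 feasible schedule whose stage-2 cost is larger by at most K (p - p*), where K
  comes from the Lipschitz constant of the step cost. For kappa > K a larger peak never pays off
  in the combined problem, which therefore splits into the two stages.\<close>

(* The largest one-step increment of the state of charge under peak p: charging q \<le> Pmax and
   q \<le> p - Dt gains eta q, and when p < Dt a discharge of at least Dt - p loses at least
   (Dt - p) / eta. *)
definition soc_step_max :: "real \<Rightarrow> real \<Rightarrow> real \<Rightarrow> real \<Rightarrow> real" where
  "soc_step_max Pmax eta Dt p = min (eta * Pmax) (min (eta * (p - Dt)) ((p - Dt) / eta))"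

definition step_discharge :: "real \<Rightarrow> real \<Rightarrow> real" where
  "step_discharge eta x = (if 0 \<le> x then 0 else - (eta * x))"

definition step_charge :: "real \<Rightarrow> real \<Rightarrow> real" where
  "step_charge eta x = (if 0 \<le> x then x / eta else 0)"

definition step_cost :: "real \<Rightarrow> real \<Rightarrow> real \<Rightarrow> real \<Rightarrow> real" where
  "step_cost c eta l x = c * step_discharge eta x - l * (step_discharge eta x - step_charge eta x)"

lemma le_one_scaling:
  fixes x eta :: real
  assumes "0 \<le> x" "0 < eta" "eta \<le> 1"
  shows "eta * x \<le> x" and "x \<le> x / eta"
  using assms mult_right_mono[of eta 1 x] by (simp_all add: le_divide_eq mult.commute)

lemma soc_step_bounds:
  fixes eta P Dt p d q :: real
  assumes "0 < eta" "eta \<le> 1" "0 \<le> d" "d \<le> P" "0 \<le> q" "q \<le> P" "Dt - d + q \<le> p"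
  shows "- P / eta \<le> eta * q - d / eta" and "eta * q - d / eta \<le> soc_step_max P eta Dt p"
proof -
  have "d / eta \<le> P / eta" "0 \<le> eta * q" "0 \<le> d / eta" "eta * q \<le> eta * P"
    using assms by (simp_all add: divide_right_mono mult_left_mono)
  then show "- P / eta \<le> eta * q - d / eta"
    by simp
  have "eta * d \<le> d" "d \<le> d / eta" "eta * q \<le> q" "q \<le> q / eta"
    using assms le_one_scaling by simp_all
  moreover have "eta * q - eta * d \<le> eta * (p - Dt)" "q / eta - d / eta \<le> (p - Dt) / eta"
    using assms mult_left_mono[of "q - d" "p - Dt" eta] divide_right_mono[of "q - d" "p - Dt" eta]
    by (simp_all add: right_diff_distrib diff_divide_distrib)
  ultimately show "eta * q - d / eta \<le> soc_step_max P eta Dt p"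
    unfolding soc_step_max_def using \<open>0 \<le> d / eta\<close> \<open>eta * q \<le> eta * P\<close> by simp
qed

lemma soc_step_max_shift:
  fixes eta P Dt p p' :: real
  assumes "0 < eta" "eta \<le> 1" "p' \<le> p"
  shows "soc_step_max P eta Dt p - (p - p') / eta \<le> soc_step_max P eta Dt p'"
proof -
  have "eta * (p - p') \<le> p - p'" "p - p' \<le> (p - p') / eta"
    using assms le_one_scaling by simp_all
  then show ?thesis
    using assms unfolding soc_step_max_def by (auto simp: algebra_simps diff_divide_distrib)
qed

lemma step_cost_le:
  fixes eta d q c l :: real
  assumes "0 < eta" "eta \<le> 1" "0 \<le> d" "0 \<le> q" "0 \<le> l" "0 \<le> c"
  shows "step_cost c eta l (eta * q - d / eta) \<le> c * d - l * (d - q)"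
proof (cases "0 \<le> eta * q - d / eta")
  case True
  have "step_cost c eta l (eta * q - d / eta) = l * q - l * d / eta\<^sup>2"
    using True assms by (simp add: step_cost_def step_discharge_def step_charge_def
        field_simps power2_eq_square)
  moreover have "l * d \<le> l * d / eta\<^sup>2"
    using assms le_one_scaling(2)[of "l * d" "eta\<^sup>2"] by (simp add: power_le_one)
  moreover have "0 \<le> c * d"
    using assms by simp
  ultimately show ?thesis
    by (simp add: algebra_simps)
next
  case False
  have "- (eta * (eta * q - d / eta)) = d - eta\<^sup>2 * q"
    using assms by (simp add: algebra_simps power2_eq_square)
  then have dc: "step_discharge eta (eta * q - d / eta) = d - eta\<^sup>2 * q"
    "step_charge eta (eta * q - d / eta) = 0"
    using False by (simp_all add: step_discharge_def step_charge_def)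
  have "step_cost c eta l (eta * q - d / eta) = (c - l) * (d - eta\<^sup>2 * q)"
    unfolding step_cost_def dc by (simp add: algebra_simps)
  moreover have "l * (eta\<^sup>2 * q) \<le> l * q"
    using assms le_one_scaling(1)[of q "eta\<^sup>2"] by (simp add: mult_left_mono power_le_one)
  moreover have "0 \<le> c * (eta\<^sup>2 * q)"
    using assms by simp
  ultimately show ?thesis
    by (simp add: algebra_simps)
qed

lemma step_discharge_charge:
  fixes eta P Dt p x :: real
  assumes "0 < eta" "eta \<le> 1" "0 \<le> P" "- P / eta \<le> x" "x \<le> soc_step_max P eta Dt p"
  shows "0 \<le> step_discharge eta x" "step_discharge eta x \<le> P"
    and "0 \<le> step_charge eta x" "step_charge eta x \<le> P"
    and "eta * step_charge eta x - step_discharge eta x / eta = x"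
    and "Dt - step_discharge eta x + step_charge eta x \<le> p"
proof -
  have charge: "x / eta \<le> P \<and> x / eta \<le> p - Dt" if "0 \<le> x"
  proof -
    have "x \<le> eta * P" "x \<le> eta * (p - Dt)"
      using that assms(5) by (auto simp: soc_step_max_def)
    then show ?thesis
      using assms by (simp add: divide_le_eq mult.commute)
  qed
  have discharge: "- (eta * x) \<le> P \<and> eta * x \<le> p - Dt \<and> eta * x < 0" if "x < 0"
  proof -
    have "x \<le> (p - Dt) / eta"
      using that assms(5) by (auto simp: soc_step_max_def)
    moreover have "- P \<le> eta * x"
      using assms(1,4) by (simp add: field_simps)
    moreover have "eta * x < 0"
      using assms(1) that by (simp add: mult_pos_neg)
    ultimately show ?thesis
      using assms by (simp add: le_divide_eq mult.commute)
  qed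
  show "0 \<le> step_discharge eta x" "step_discharge eta x \<le> P"
    "0 \<le> step_charge eta x" "step_charge eta x \<le> P"
    "eta * step_charge eta x - step_discharge eta x / eta = x"
    "Dt - step_discharge eta x + step_charge eta x \<le> p"
    using charge discharge assms by (auto simp: step_discharge_def step_charge_def)
qed

lemma max_min_zero_lipschitz:
  fixes a b \<alpha> \<beta> L :: real
  assumes "\<bar>\<alpha>\<bar> \<le> L" "\<bar>\<beta>\<bar> \<le> L"
  shows "\<alpha> * max a 0 + \<beta> * min a 0 \<le> \<alpha> * max b 0 + \<beta> * min b 0 + L * \<bar>a - b\<bar>"
proof -
  have bound: "\<gamma> * x \<le> L * \<bar>x\<bar>" if "\<bar>\<gamma>\<bar> \<le> L" for \<gamma> x :: real
    using abs_ge_self[of "\<gamma> * x"] mult_right_mono[OF that abs_ge_zero[of x]]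
    by (simp add: abs_mult)
  have "\<bar>max a 0 - max b 0\<bar> + \<bar>min a 0 - min b 0\<bar> = \<bar>a - b\<bar>"
    by (auto simp: max_def min_def)
  then have "L * \<bar>max a 0 - max b 0\<bar> + L * \<bar>min a 0 - min b 0\<bar> = L * \<bar>a - b\<bar>"
    by (simp flip: distrib_left)
  then show ?thesis
    using bound[OF assms(1), of "max a 0 - max b 0"] bound[OF assms(2), of "min a 0 - min b 0"]
    by (simp add: algebra_simps)
qed

lemma step_cost_lipschitz:
  fixes eta c l a b :: real
  assumes "0 < eta" "eta \<le> 1" "0 \<le> l" "0 \<le> c"
  shows "step_cost c eta l a \<le> step_cost c eta l b + (c + l) / eta * \<bar>a - b\<bar>"
proof -
  have eq: "step_cost c eta l x = l / eta * max x 0 + (l - c) * eta * min x 0" for x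
    using assms by (auto simp: step_cost_def step_discharge_def step_charge_def algebra_simps)
  have "(c + l) * eta \<le> (c + l) / eta"
    using assms le_one_scaling[of "c + l" eta] by (simp add: mult.commute)
  moreover have "\<bar>l - c\<bar> * eta \<le> (c + l) * eta"
    using assms by (intro mult_right_mono) auto
  moreover have "\<bar>(l - c) * eta\<bar> = \<bar>l - c\<bar> * eta"
    using assms by (simp add: abs_mult)
  ultimately have "\<bar>(l - c) * eta\<bar> \<le> (c + l) / eta"
    by linarith
  moreover have "\<bar>l / eta\<bar> \<le> (c + l) / eta"
    using assms by (simp add: divide_right_mono)
  ultimately show ?thesis
    unfolding eq by (intro max_min_zero_lipschitz)
qed

(* Paths are indexed from 1; the value at 0 is irrelevant. *)
fun capped_path :: "(nat \<Rightarrow> real) \<Rightarrow> (nat \<Rightarrow> real) \<Rightarrow> nat \<Rightarrow> real" where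
  "capped_path E u 0 = E 0"
| "capped_path E u (Suc 0) = E 1"
| "capped_path E u (Suc (Suc s)) = min (E (Suc (Suc s))) (capped_path E u (Suc s) + u (Suc s))"

lemma capped_path_Suc:
  "1 \<le> s \<Longrightarrow> capped_path E u (Suc s) = min (E (Suc s)) (capped_path E u s + u s)"
  by (cases s) auto

lemma capped_path_le: "capped_path E u s \<le> E s"
  by (induction E u s rule: capped_path.induct) auto

lemma capped_path_ge:
  assumes "0 \<le> ep" and "\<forall>t\<in>{1..<s}. E (Suc t) - E t \<le> u t + ep" and "1 \<le> s"
  shows "E s - (real s - 1) * ep \<le> capped_path E u s"
  using assms(3,2)
proof (induction s rule: dec_induct)
  case base
  then show ?case by simp
next
  case (step s)
  then have "E s - (real s - 1) * ep \<le> capped_path E u s" "E (Suc s) - E s \<le> u s + ep"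
    by auto
  then show ?case
    using step.hyps(1) assms(1) by (simp add: capped_path_Suc algebra_simps)
qed

lemma capped_path_step_bounds:
  assumes "1 \<le> s" and "L \<le> E (Suc s) - E s" and "L \<le> u s"
  shows "L \<le> capped_path E u (Suc s) - capped_path E u s"
    and "capped_path E u (Suc s) - capped_path E u s \<le> u s"
  using assms capped_path_le[of E u s] capped_path_Suc[OF assms(1), of E u] by (simp_all add: min_def)

function floor_path :: "real \<Rightarrow> (nat \<Rightarrow> real) \<Rightarrow> nat \<Rightarrow> nat \<Rightarrow> real" where
  "floor_path lo u n s = (if n \<le> s then lo else max lo (floor_path lo u n (Suc s) - u s))"
  by pat_completeness auto
termination by (relation "Wellfounded.measure (\<lambda>(lo, u, n, s). n - s)") auto

declare floor_path.simps [simp del]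

lemma floor_path_end: "floor_path lo u n n = lo"
  by (subst floor_path.simps) simp

lemma floor_path_step: "s < n \<Longrightarrow> floor_path lo u n s = max lo (floor_path lo u n (Suc s) - u s)"
  by (subst floor_path.simps) simp

lemma floor_path_ge: "lo \<le> floor_path lo u n s"
  by (subst floor_path.simps) simp

lemma floor_path_le:
  assumes "0 \<le> ep" and "\<forall>t\<in>{s..<n}. F (Suc t) - F t \<le> u t + ep"
    and "\<forall>t\<in>{s..n}. lo \<le> F t" and "s \<le> n"
  shows "floor_path lo u n s \<le> F s + real (n - s) * ep"
  using assms(4,2,3)
proof (induction s rule: inc_induct)
  case base
  then show ?case by (simp add: floor_path_end)
next
  case (step s)
  define k where "k = real (n - Suc s)"
  have "real (n - s) = k + 1" "0 \<le> k * ep"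
    using step.hyps(2) assms(1) by (simp_all add: k_def of_nat_diff)
  moreover have "floor_path lo u n (Suc s) \<le> F (Suc s) + k * ep"
    "F (Suc s) - F s \<le> u s + ep" "lo \<le> F s"
    using step by (auto simp: k_def)
  ultimately show ?case
    using assms(1) unfolding floor_path_step[OF step.hyps(2)] by (simp add: algebra_simps)
qed

lemma floor_path_step_bounds:
  assumes "s < n" and "L \<le> 0" and "L \<le> u s"
  shows "L \<le> floor_path lo u n (Suc s) - floor_path lo u n s"
    and "floor_path lo u n (Suc s) - floor_path lo u n s \<le> u s"
  using assms floor_path_ge[of lo u n "Suc s"] floor_path_step[OF assms(1), of lo u]
  by (simp_all add: max_def)

lemma max_step_bounds:
  fixes a0 a1 b0 b1 L U :: real
  assumes "L \<le> a1 - a0" "a1 - a0 \<le> U" "L \<le> b1 - b0" "b1 - b0 \<le> U"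
  shows "L \<le> max a1 b1 - max a0 b0" and "max a1 b1 - max a0 b0 \<le> U"
  using assms by (auto simp: max_def)

lemma min_step_bounds:
  fixes a0 a1 b0 b1 L U :: real
  assumes "L \<le> a1 - a0" "a1 - a0 \<le> U" "L \<le> b1 - b0" "b1 - b0 \<le> U"
  shows "L \<le> min a1 b1 - min a0 b0" and "min a1 b1 - min a0 b0 \<le> U"
  using assms by (auto simp: min_def)

lemma compact_Pi_UNIV:
  assumes "\<And>i. compact (K i)"
  shows "compact (Pi UNIV K :: ('a \<Rightarrow> 'b::topological_space) set)"
proof -
  have "compactin (product_topology (\<lambda>i. euclidean) UNIV) (PiE UNIV K)"
    using assms by (simp add: compactin_PiE)
  then show ?thesis by (simp add: euclidean_product_topology PiE_UNIV_domain)
qed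

lemma ex_is_min_compact_dominating:
  assumes "compact C" "C \<noteq> {}" "C \<subseteq> A" "continuous_on C f"
    and "\<And>y. y \<in> A \<Longrightarrow> \<exists>z\<in>C. f z \<le> f y"
  shows "\<exists>x. is_min A f x"
proof -
  obtain x where "x \<in> C" "\<forall>z\<in>C. f x \<le> f z"
    using continuous_attains_inf[OF assms(1-2,4)] by blast
  then have "is_min A f x"
    unfolding is_min_def using assms(3,5) by (meson order_trans subsetD)
  then show ?thesis ..
qed

lemma closed_stage2_feas: "closed (stage2_feas T D Pmax Elo Ehi eta e1 pstar estar)"
proof -
  have "stage2_feas T D Pmax Elo Ehi eta e1 pstar estar = (\<Inter>t\<in>{1..T}. {(d, q, e).
        pstar \<ge> D t - d t + q t \<and>
        e (Suc t) = prev_soc e1 e t - d t / eta + eta * q t \<and>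
        0 \<le> d t \<and> d t \<le> Pmax \<and> 0 \<le> q t \<and> q t \<le> Pmax \<and>
        Elo \<le> e (Suc t) \<and> e (Suc t) \<le> Ehi \<and> estar (Suc t) \<le> e (Suc t)})"
    unfolding stage2_feas_def feasS_def by auto
  also have "closed \<dots>"
  proof (intro closed_INT ballI)
    fix t :: nat
    have d: "continuous_on UNIV (\<lambda>y::point2. fst y t)"
      and q: "continuous_on UNIV (\<lambda>y::point2. fst (snd y) t)"
      and e: "continuous_on UNIV (\<lambda>y::point2. snd (snd y) s)" for s
      by (rule continuous_on_product_then_coordinatewise, intro continuous_intros)+
    have "continuous_on UNIV (\<lambda>y::point2. prev_soc e1 (snd (snd y)) t)"
      unfolding prev_soc_def by (cases "t = 1") (simp_all add: e)
    then show "closed {(d, q, e). pstar \<ge> D t - d t + q t \<and>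
        e (Suc t) = prev_soc e1 e t - d t / eta + eta * q t \<and>
        0 \<le> d t \<and> d t \<le> Pmax \<and> 0 \<le> q t \<and> q t \<le> Pmax \<and>
        Elo \<le> e (Suc t) \<and> e (Suc t) \<le> Ehi \<and> estar (Suc t) \<le> e (Suc t)}"
      unfolding case_prod_beta divide_inverse
      by (intro closed_Collect_conj closed_Collect_le closed_Collect_eq continuous_on_diff
          continuous_on_add continuous_on_const continuous_on_mult d q e)
  qed
  finally show ?thesis .
qed

lemma continuous_stage2_obj: "continuous_on S (stage2_obj T c lam)"
proof -
  have d: "continuous_on UNIV (\<lambda>y::point2. fst y t)"
    and q: "continuous_on UNIV (\<lambda>y::point2. fst (snd y) t)" for t
    by (rule continuous_on_product_then_coordinatewise, intro continuous_intros)+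
  have "continuous_on UNIV (\<lambda>y::point2. \<Sum>t = 1..T. c * fst y t - lam t * (fst y t - fst (snd y) t))"
    by (intro continuous_on_sum continuous_on_diff continuous_on_mult continuous_on_const d q)
  then show ?thesis
    unfolding stage2_obj_def case_prod_beta by (rule continuous_on_subset) simp
qed

(* Coordinates outside the horizon are unconstrained and do not enter the objective; zeroing
   them confines the search for a stage-2 minimiser to a compact set. *)
definition zero_outside :: "nat set \<Rightarrow> (nat \<Rightarrow> real) \<Rightarrow> nat \<Rightarrow> real" where
  "zero_outside I f t = (if t \<in> I then f t else 0)"

definition box_on :: "nat set \<Rightarrow> real \<Rightarrow> real \<Rightarrow> (nat \<Rightarrow> real) set" where
  "box_on I a b = Pi UNIV (\<lambda>t. if t \<in> I then {a..b} else {0})"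

lemma compact_box_on: "compact (box_on I a b)"
  unfolding box_on_def by (intro compact_Pi_UNIV) auto

lemma zero_outside_in_box_on:
  "(\<And>t. t \<in> I \<Longrightarrow> f t \<in> {a..b}) \<Longrightarrow> zero_outside I f \<in> box_on I a b"
  by (auto simp: zero_outside_def box_on_def)

lemma stage2_feas_zero_outside:
  assumes y: "(d, q, e) \<in> stage2_feas T D Pmax Elo Ehi eta e1 pstar estar"
  shows "(zero_outside {1..T} d, zero_outside {1..T} q, zero_outside {2..T+1} e)
      \<in> stage2_feas T D Pmax Elo Ehi eta e1 pstar estar \<inter>
        (box_on {1..T} 0 Pmax \<times> box_on {1..T} 0 Pmax \<times> box_on {2..T+1} Elo Ehi)"
proof -
  have same: "zero_outside {1..T} d t = d t" "zero_outside {1..T} q t = q t"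
      "zero_outside {2..T+1} e (Suc t) = e (Suc t)"
      "prev_soc e1 (zero_outside {2..T+1} e) t = prev_soc e1 e t"
    if "t \<in> {1..T}" for t
    using that by (auto simp: zero_outside_def prev_soc_def)
  have "e t \<in> {Elo..Ehi}" if "t \<in> {2..T+1}" for t
    using y that unfolding stage2_feas_def feasS_def by (cases t) (auto simp: Ball_def)
  moreover have "d t \<in> {0..Pmax}" "q t \<in> {0..Pmax}" if "t \<in> {1..T}" for t
    using y that unfolding stage2_feas_def feasS_def by auto
  moreover have "(zero_outside {1..T} d, zero_outside {1..T} q, zero_outside {2..T+1} e)
      \<in> stage2_feas T D Pmax Elo Ehi eta e1 pstar estar"
    using y unfolding stage2_feas_def feasS_def mem_Collect_eq prod.case Ball_def
    by (simp (no_asm) only: same cong: imp_cong)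
  ultimately show ?thesis
    by (auto intro!: zero_outside_in_box_on)
qed

lemma stage2_obj_zero_outside:
  "stage2_obj T c lam (zero_outside {1..T} d, zero_outside {1..T} q, e') = stage2_obj T c lam (d, q, e)"
  by (auto simp: stage2_obj_def zero_outside_def intro!: sum.cong)

lemma ex_is_min_stage2:
  assumes "stage2_feas T D Pmax Elo Ehi eta e1 pstar estar \<noteq> {}"
  shows "\<exists>y. is_min (stage2_feas T D Pmax Elo Ehi eta e1 pstar estar) (stage2_obj T c lam) y"
proof -
  let ?A = "stage2_feas T D Pmax Elo Ehi eta e1 pstar estar"
  define C where "C = ?A \<inter> (box_on {1..T} 0 Pmax \<times> box_on {1..T} 0 Pmax \<times> box_on {2..T+1} Elo Ehi)"
  have dominated: "\<exists>z\<in>C. stage2_obj T c lam z \<le> stage2_obj T c lam y" if "y \<in> ?A" for y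
    using that stage2_feas_zero_outside stage2_obj_zero_outside unfolding C_def
    by (metis order_refl prod_cases3)
  have "compact C"
    unfolding C_def by (intro closed_Int_compact closed_stage2_feas compact_Times compact_box_on)
  moreover have "C \<noteq> {}"
    using assms dominated by blast
  ultimately show ?thesis
    using ex_is_min_compact_dominating[of C ?A "stage2_obj T c lam"] continuous_stage2_obj dominated
    unfolding C_def by blast
qed

lemma combined_obj_split:
  "combined_obj T c lam D kappa (p, d, q, e) =
     (\<Sum>t = 1..T. lam t * D t) + kappa * p + stage2_obj T c lam (d, q, e)"
proof -
  have "(\<Sum>t = 1..T. c * d t + lam t * (D t - d t + q t)) =
      (\<Sum>t = 1..T. lam t * D t) + (\<Sum>t = 1..T. c * d t - lam t * (d t - q t))"
    by (simp add: sum.distrib[symmetric] algebra_simps)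
  then show ?thesis
    unfolding combined_obj_def stage2_obj_def by simp
qed

locale battery =
  fixes T :: nat and D lam :: "nat \<Rightarrow> real" and c Pmax Elo Ehi eta e1 :: real
  assumes lam_nonneg: "\<forall>t\<in>{1..T}. lam t \<ge> 0"
    and c_nonneg: "c \<ge> 0"
    and Pmax_nonneg: "0 \<le> Pmax"
    and eta_pos: "0 < eta" and eta_le_1: "eta \<le> 1"
    and e1_bounds: "Elo \<le> e1" "e1 \<le> Ehi"
begin

abbreviation feas :: "point set" where
  "feas \<equiv> feasS T D Pmax Elo Ehi eta e1"

abbreviation step_max :: "real \<Rightarrow> nat \<Rightarrow> real" where
  "step_max p t \<equiv> soc_step_max Pmax eta (D t) p"

definition soc_admissible :: "real \<Rightarrow> (nat \<Rightarrow> real) \<Rightarrow> bool" where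
  "soc_admissible p E \<longleftrightarrow> E 1 = e1 \<and>
     (\<forall>t\<in>{1..T}. - Pmax / eta \<le> E (Suc t) - E t \<and> E (Suc t) - E t \<le> step_max p t) \<and>
     (\<forall>t\<in>{1..T+1}. Elo \<le> E t \<and> E t \<le> Ehi)"

definition path_cost :: "(nat \<Rightarrow> real) \<Rightarrow> real" where
  "path_cost E = (\<Sum>t = 1..T. step_cost c eta (lam t) (E (Suc t) - E t))"

definition canonical_point :: "(nat \<Rightarrow> real) \<Rightarrow> point2" where
  "canonical_point E =
     (\<lambda>t. step_discharge eta (E (Suc t) - E t), \<lambda>t. step_charge eta (E (Suc t) - E t), E)"

lemma feas_step:
  assumes "(p, d, q, e) \<in> feas" and "t \<in> {1..T}"
  shows "0 \<le> d t" "d t \<le> Pmax" "0 \<le> q t" "q t \<le> Pmax" "D t - d t + q t \<le> p"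
    and "Elo \<le> e (Suc t)" "e (Suc t) \<le> Ehi"
    and "prev_soc e1 e (Suc t) - prev_soc e1 e t = eta * q t - d t / eta"
proof -
  have h: "D t - d t + q t \<le> p \<and> e (Suc t) = prev_soc e1 e t - d t / eta + eta * q t \<and>
      0 \<le> d t \<and> d t \<le> Pmax \<and> 0 \<le> q t \<and> q t \<le> Pmax \<and>
      Elo \<le> e (Suc t) \<and> e (Suc t) \<le> Ehi"
    using assms unfolding feasS_def by blast
  then show "0 \<le> d t" "d t \<le> Pmax" "0 \<le> q t" "q t \<le> Pmax" "D t - d t + q t \<le> p"
    "Elo \<le> e (Suc t)" "e (Suc t) \<le> Ehi"
    by blast+
  show "prev_soc e1 e (Suc t) - prev_soc e1 e t = eta * q t - d t / eta"
    using h assms(2) by (simp add: prev_soc_def)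
qed

lemma soc_admissible_of_feas:
  assumes "(p, d, q, e) \<in> feas"
  shows "soc_admissible p (prev_soc e1 e)"
proof -
  have "Elo \<le> prev_soc e1 e t \<and> prev_soc e1 e t \<le> Ehi" if "t \<in> {1..T+1}" for t
  proof (cases "t = 1")
    case False
    with that obtain s where "t = Suc s" "s \<in> {1..T}"
      by (cases t) auto
    then show ?thesis
      using feas_step(6,7)[OF assms] by (simp add: prev_soc_def)
  qed (use e1_bounds in \<open>simp add: prev_soc_def\<close>)
  moreover have "- Pmax / eta \<le> prev_soc e1 e (Suc t) - prev_soc e1 e t \<and>
      prev_soc e1 e (Suc t) - prev_soc e1 e t \<le> step_max p t" if "t \<in> {1..T}" for t
    using soc_step_bounds[OF eta_pos eta_le_1 feas_step(1-5)[OF assms that]]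
      feas_step(8)[OF assms that] by simp
  ultimately show ?thesis
    unfolding soc_admissible_def by (simp add: prev_soc_def)
qed

lemma path_cost_le_stage2_obj:
  assumes "(p, d, q, e) \<in> feas"
  shows "path_cost (prev_soc e1 e) \<le> stage2_obj T c lam (d, q, e)"
  unfolding path_cost_def stage2_obj_def prod.case
proof (rule sum_mono)
  fix t assume t: "t \<in> {1..T}"
  show "step_cost c eta (lam t) (prev_soc e1 e (Suc t) - prev_soc e1 e t) \<le> c * d t - lam t * (d t - q t)"
    using step_cost_le[OF eta_pos eta_le_1 feas_step(1,3)[OF assms t] _ c_nonneg, of "lam t"]
      feas_step(8)[OF assms t] lam_nonneg t by simp
qed

lemma canonical_point_feas:
  assumes "soc_admissible p E"
  shows "(p, canonical_point E) \<in> feas"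
proof -
  define dis where "dis t = step_discharge eta (E (Suc t) - E t)" for t
  define chg where "chg t = step_charge eta (E (Suc t) - E t)" for t
  have "D t - dis t + chg t \<le> p \<and> E (Suc t) = prev_soc e1 E t - dis t / eta + eta * chg t \<and>
      0 \<le> dis t \<and> dis t \<le> Pmax \<and> 0 \<le> chg t \<and> chg t \<le> Pmax \<and>
      Elo \<le> E (Suc t) \<and> E (Suc t) \<le> Ehi"
    if t: "t \<in> {1..T}" for t
  proof -
    have step: "- Pmax / eta \<le> E (Suc t) - E t" "E (Suc t) - E t \<le> step_max p t"
      "Elo \<le> E (Suc t)" "E (Suc t) \<le> Ehi" "prev_soc e1 E t = E t"
      using assms t by (auto simp: soc_admissible_def prev_soc_def)
    show ?thesis
      using step_discharge_charge[OF eta_pos eta_le_1 Pmax_nonneg step(1,2)] step(3-5)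
      unfolding dis_def chg_def by linarith
  qed
  then show ?thesis
    unfolding canonical_point_def feasS_def dis_def chg_def by simp
qed

lemma stage2_obj_canonical_point: "stage2_obj T c lam (canonical_point E) = path_cost E"
  by (simp add: stage2_obj_def canonical_point_def path_cost_def step_cost_def)

lemma soc_admissible_min:
  assumes "soc_admissible p E" and "soc_admissible p E'"
  shows "soc_admissible p (\<lambda>s. min (E s) (E' s))"
proof -
  have "- Pmax / eta \<le> min (E (Suc t)) (E' (Suc t)) - min (E t) (E' t) \<and>
      min (E (Suc t)) (E' (Suc t)) - min (E t) (E' t) \<le> step_max p t" if "t \<in> {1..T}" for t
    using assms that min_step_bounds[of "- Pmax / eta" "E (Suc t)" "E t" "step_max p t" "E' (Suc t)" "E' t"]
    unfolding soc_admissible_def by auto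
  then show ?thesis
    using assms unfolding soc_admissible_def by auto
qed

lemma soc_admissible_step_shift:
  assumes "soc_admissible p E" and "p' \<le> p" and "t \<in> {1..T}"
  shows "E (Suc t) - E t \<le> step_max p' t + (p - p') / eta"
proof -
  have "E (Suc t) - E t \<le> step_max p t"
    using assms(1,3) unfolding soc_admissible_def by blast
  then show ?thesis
    using soc_step_max_shift[OF eta_pos eta_le_1 assms(2), of Pmax "D t"] by linarith
qed

lemma capped_path_close:
  assumes "soc_admissible p E" and "p' \<le> p" and "s \<in> {1..T+1}"
  shows "capped_path E (step_max p') s \<le> E s"
    and "E s - real T * ((p - p') / eta) \<le> capped_path E (step_max p') s"
proof -
  show "capped_path E (step_max p') s \<le> E s"
    by (rule capped_path_le)
  have "E (Suc t) - E t \<le> step_max p' t + (p - p') / eta" if "t \<in> {1..<s}" for t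
    using assms(3) that by (intro soc_admissible_step_shift[OF assms(1,2)]) auto
  then have "E s - (real s - 1) * ((p - p') / eta) \<le> capped_path E (step_max p') s"
    using assms eta_pos by (intro capped_path_ge) auto
  moreover have "(real s - 1) * ((p - p') / eta) \<le> real T * ((p - p') / eta)"
    using assms eta_pos by (intro mult_right_mono) auto
  ultimately show "E s - real T * ((p - p') / eta) \<le> capped_path E (step_max p') s"
    by linarith
qed

lemma floor_path_close:
  assumes E: "soc_admissible p E" and E0: "soc_admissible p' E0" and "p' \<le> p"
    and "s \<in> {1..T+1}"
  shows "floor_path Elo (step_max p') (T + 1) s \<le> E0 s"
    and "floor_path Elo (step_max p') (T + 1) s \<le> E s + real T * ((p - p') / eta)"
proof -
  have "floor_path Elo (step_max p') (T + 1) s \<le> E0 s + real (T + 1 - s) * 0"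
    using E0 assms(4) by (intro floor_path_le) (auto simp: soc_admissible_def)
  then show "floor_path Elo (step_max p') (T + 1) s \<le> E0 s"
    by simp
  have "E (Suc t) - E t \<le> step_max p' t + (p - p') / eta" if "t \<in> {s..<T+1}" for t
    using assms(4) that by (intro soc_admissible_step_shift[OF E assms(3)]) auto
  then have "floor_path Elo (step_max p') (T + 1) s \<le> E s + real (T + 1 - s) * ((p - p') / eta)"
    using E assms(3,4) eta_pos by (intro floor_path_le) (auto simp: soc_admissible_def)
  moreover have "real (T + 1 - s) * ((p - p') / eta) \<le> real T * ((p - p') / eta)"
    using assms eta_pos by (intro mult_right_mono) auto
  ultimately show "floor_path Elo (step_max p') (T + 1) s \<le> E s + real T * ((p - p') / eta)"
    by linarith
qed

lemma soc_admissible_lower_peak: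
  assumes E: "soc_admissible p E" and E0: "soc_admissible p' E0" and "p' \<le> p"
  obtains E' where "soc_admissible p' E'"
    and "\<And>s. s \<in> {1..T+1} \<Longrightarrow> \<bar>E' s - E s\<bar> \<le> real T * ((p - p') / eta)"
proof -
  (* g is E held down so that it never rises faster than the peak-p' bound allows; h is the
     lowest level from which that bound still lets one stay above Elo until T + 1, and it lies
     below E0, hence below e1 at the start. Their maximum obeys the step bounds of both. *)
  define g where "g = capped_path E (step_max p')"
  define h where "h = floor_path Elo (step_max p') (T + 1)"
  note g = capped_path_close[OF E assms(3), folded g_def]
  note h = floor_path_close[OF E E0 assms(3), folded h_def]
  have "soc_admissible p' (\<lambda>s. max (g s) (h s))"
    unfolding soc_admissible_def
  proof (intro conjI ballI)
    have "g 1 = e1" "h 1 \<le> e1"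
      using E E0 h(1)[of 1] by (simp_all add: g_def soc_admissible_def)
    then show "max (g 1) (h 1) = e1"
      by simp
  next
    fix t assume t: "t \<in> {1..T}"
    have "- Pmax / eta \<le> step_max p' t" "- Pmax / eta \<le> E (Suc t) - E t"
      using E E0 t unfolding soc_admissible_def by force+
    moreover have "- Pmax / eta \<le> 0"
      using eta_pos Pmax_nonneg by simp
    ultimately have "- Pmax / eta \<le> g (Suc t) - g t" "g (Suc t) - g t \<le> step_max p' t"
      and "- Pmax / eta \<le> h (Suc t) - h t" "h (Suc t) - h t \<le> step_max p' t"
      using t capped_path_step_bounds[of t "- Pmax / eta" E "step_max p'"]
        floor_path_step_bounds[of t "T + 1" "- Pmax / eta" "step_max p'" Elo]
      unfolding g_def h_def by auto
    then show "- Pmax / eta \<le> max (g (Suc t)) (h (Suc t)) - max (g t) (h t)"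
      "max (g (Suc t)) (h (Suc t)) - max (g t) (h t) \<le> step_max p' t"
      by (fact max_step_bounds(1), fact max_step_bounds(2))
  next
    fix s assume s: "s \<in> {1..T+1}"
    show "Elo \<le> max (g s) (h s)"
      using floor_path_ge unfolding h_def by (simp add: le_max_iff_disj)
    have "E s \<le> Ehi" "E0 s \<le> Ehi"
      using E E0 s unfolding soc_admissible_def by blast+
    then show "max (g s) (h s) \<le> Ehi"
      using g(1)[OF s] h(1)[OF s] by simp
  qed
  moreover have "\<bar>max (g s) (h s) - E s\<bar> \<le> real T * ((p - p') / eta)" if "s \<in> {1..T+1}" for s
    using g[OF that] h[OF that] by (auto simp: abs_le_iff)
  ultimately show ?thesis
    by (rule that)
qed

(* (c + lam t) / eta is a Lipschitz constant of the step cost, and lowering the peak by h moves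
   every increment of the state-of-charge path by at most 2 T h / eta. *)
definition kappa_threshold :: real where
  "kappa_threshold = 2 * real T / eta * (\<Sum>t = 1..T. (c + lam t) / eta)"

lemma path_cost_lipschitz:
  assumes close: "\<And>s. s \<in> {1..T+1} \<Longrightarrow> \<bar>E' s - E s\<bar> \<le> r"
  shows "path_cost E' \<le> path_cost E + (\<Sum>t = 1..T. (c + lam t) / eta) * (2 * r)"
proof -
  have "step_cost c eta (lam t) (E' (Suc t) - E' t)
      \<le> step_cost c eta (lam t) (E (Suc t) - E t) + (c + lam t) / eta * (2 * r)"
    if t: "t \<in> {1..T}" for t
  proof -
    have "\<bar>(E' (Suc t) - E' t) - (E (Suc t) - E t)\<bar> \<le> 2 * r"
      using close[of t] close[of "Suc t"] t by auto
    moreover have "0 \<le> (c + lam t) / eta"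
      using c_nonneg lam_nonneg t eta_pos by simp
    ultimately have "(c + lam t) / eta * \<bar>(E' (Suc t) - E' t) - (E (Suc t) - E t)\<bar>
        \<le> (c + lam t) / eta * (2 * r)"
      by (rule mult_left_mono)
    moreover have "0 \<le> lam t"
      using lam_nonneg t by simp
    ultimately show ?thesis
      using step_cost_lipschitz[OF eta_pos eta_le_1 _ c_nonneg, of "lam t" "E' (Suc t) - E' t"
          "E (Suc t) - E t"]
      by linarith
  qed
  then have "path_cost E'
      \<le> (\<Sum>t = 1..T. step_cost c eta (lam t) (E (Suc t) - E t) + (c + lam t) / eta * (2 * r))"
    unfolding path_cost_def by (rule sum_mono)
  also have "\<dots> = path_cost E + (\<Sum>t = 1..T. (c + lam t) / eta) * (2 * r)"
    by (simp add: path_cost_def sum.distrib sum_distrib_right)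
  finally show ?thesis .
qed

lemma feas_lower_peak:
  assumes x: "(p, d, q, e) \<in> feas" and "(p', d0, q0, e0) \<in> feas" and "p' \<le> p"
  obtains d' q' e' where "(p', d', q', e') \<in> feas"
    and "\<And>t. t \<in> {1..T} \<Longrightarrow> e' (Suc t) \<le> e (Suc t) + real T * ((p - p') / eta)"
    and "stage2_obj T c lam (d', q', e') \<le> stage2_obj T c lam (d, q, e) + kappa_threshold * (p - p')"
proof -
  obtain E' where E': "soc_admissible p' E'"
    and close: "\<And>s. s \<in> {1..T+1} \<Longrightarrow>
      \<bar>E' s - prev_soc e1 e s\<bar> \<le> real T * ((p - p') / eta)"
    using soc_admissible_lower_peak[OF soc_admissible_of_feas[OF x]
        soc_admissible_of_feas[OF assms(2)] assms(3)] by blast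
  obtain d' q' where cp: "canonical_point E' = (d', q', E')"
    by (simp add: canonical_point_def)
  show ?thesis
  proof (rule that)
    show "(p', d', q', E') \<in> feas"
      using canonical_point_feas[OF E'] cp by simp
    show "E' (Suc t) \<le> e (Suc t) + real T * ((p - p') / eta)" if "t \<in> {1..T}" for t
      using close[of "Suc t"] that by (auto simp: prev_soc_def abs_le_iff)
    have "stage2_obj T c lam (d', q', E') = path_cost E'"
      using stage2_obj_canonical_point[of E'] cp by simp
    also have "\<dots> \<le> path_cost (prev_soc e1 e) +
        (\<Sum>t = 1..T. (c + lam t) / eta) * (2 * (real T * ((p - p') / eta)))"
      by (rule path_cost_lipschitz[OF close])
    also have "\<dots> \<le> stage2_obj T c lam (d, q, e) + kappa_threshold * (p - p')"
      using path_cost_le_stage2_obj[OF x] by (simp add: kappa_threshold_def algebra_simps)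
    finally show "stage2_obj T c lam (d', q', E')
        \<le> stage2_obj T c lam (d, q, e) + kappa_threshold * (p - p')" .
  qed
qed

lemma feas_min_soc:
  assumes x: "(p, d, q, e) \<in> feas" and x': "(p, d', q', e') \<in> feas"
  obtains d'' q'' e'' where "(p, d'', q'', e'') \<in> feas"
    and "\<And>t. t \<in> {1..T} \<Longrightarrow> e'' (Suc t) = min (e (Suc t)) (e' (Suc t))"
proof -
  define E where "E s = min (prev_soc e1 e s) (prev_soc e1 e' s)" for s
  have "soc_admissible p E"
    unfolding E_def
    by (rule soc_admissible_min[OF soc_admissible_of_feas[OF x] soc_admissible_of_feas[OF x']])
  then have "(p, canonical_point E) \<in> feas"
    by (rule canonical_point_feas)
  moreover obtain d'' q'' where "canonical_point E = (d'', q'', E)"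
    by (simp add: canonical_point_def)
  moreover have "E (Suc t) = min (e (Suc t)) (e' (Suc t))" if "t \<in> {1..T}" for t
    using that by (simp add: E_def prev_soc_def)
  ultimately show ?thesis
    using that by auto
qed

end

locale two_stage = battery +
  fixes delta pstar :: real and dstar qstar estar :: "nat \<Rightarrow> real"
  assumes delta_pos: "0 < delta"
    and delta_small: "delta * (real T)\<^sup>2 < eta"
    and stage1_min:
      "is_min (feasS T D Pmax Elo Ehi eta e1) (stage1_obj T delta) (pstar, dstar, qstar, estar)"
begin

lemma stage1_feas: "(pstar, dstar, qstar, estar) \<in> feas"
  using stage1_min by (simp add: is_min_def)

lemma stage1_le:
  "y \<in> feas \<Longrightarrow> stage1_obj T delta (pstar, dstar, qstar, estar) \<le> stage1_obj T delta y"
  using stage1_min by (simp add: is_min_def)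

lemma stage1_peak_le:
  assumes x: "(p, d, q, e) \<in> feas"
  shows "pstar \<le> p"
proof (rule ccontr)
  assume "\<not> pstar \<le> p"
  then have gap: "0 < pstar - p" and "p \<le> pstar"
    by simp_all
  obtain d' q' e' where x': "(p, d', q', e') \<in> feas"
    and soc: "\<And>t. t \<in> {1..T} \<Longrightarrow> e' (Suc t) \<le> estar (Suc t) + real T * ((pstar - p) / eta)"
    using feas_lower_peak[OF stage1_feas x \<open>p \<le> pstar\<close>] by blast
  define A where "A = (real T)\<^sup>2 / eta * (pstar - p)"
  have "(\<Sum>t = 1..T. e' (Suc t)) \<le> (\<Sum>t = 1..T. estar (Suc t) + real T * ((pstar - p) / eta))"
    using soc by (rule sum_mono)
  also have "\<dots> = (\<Sum>t = 1..T. estar (Suc t)) + A"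
    by (simp add: A_def sum.distrib power2_eq_square)
  finally have "delta * (\<Sum>t = 1..T. e' (Suc t)) \<le> delta * ((\<Sum>t = 1..T. estar (Suc t)) + A)"
    using delta_pos by (intro mult_left_mono) auto
  moreover have "delta * A < pstar - p"
  proof -
    have "delta * (real T)\<^sup>2 / eta < 1"
      using delta_small eta_pos by simp
    from mult_strict_right_mono[OF this gap]
    have "delta * (real T)\<^sup>2 / eta * (pstar - p) < pstar - p"
      by simp
    moreover have "delta * A = delta * (real T)\<^sup>2 / eta * (pstar - p)"
      by (simp add: A_def)
    ultimately show ?thesis
      by simp
  qed
  ultimately have "stage1_obj T delta (p, d', q', e') < stage1_obj T delta (pstar, dstar, qstar, estar)"
    unfolding stage1_obj_def by (simp add: distrib_left)
  then show False
    using stage1_le[OF x'] by simp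
qed

lemma stage1_soc_le:
  assumes x: "(pstar, d, q, e) \<in> feas" and t: "t \<in> {1..T}"
  shows "estar (Suc t) \<le> e (Suc t)"
proof (rule ccontr)
  assume "\<not> estar (Suc t) \<le> e (Suc t)"
  obtain d' q' e' where x': "(pstar, d', q', e') \<in> feas"
    and soc: "\<And>t. t \<in> {1..T} \<Longrightarrow> e' (Suc t) = min (estar (Suc t)) (e (Suc t))"
    using feas_min_soc[OF stage1_feas x] by blast
  have "(\<Sum>t = 1..T. e' (Suc t)) < (\<Sum>t = 1..T. estar (Suc t))"
  proof (rule sum_strict_mono_ex1)
    show "\<forall>s\<in>{1..T}. e' (Suc s) \<le> estar (Suc s)"
      using soc by simp
    show "\<exists>s\<in>{1..T}. e' (Suc s) < estar (Suc s)"
      using soc[OF t] t \<open>\<not> estar (Suc t) \<le> e (Suc t)\<close> by (intro bexI[of _ t]) auto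
  qed simp
  then have "stage1_obj T delta (pstar, d', q', e') < stage1_obj T delta (pstar, dstar, qstar, estar)"
    unfolding stage1_obj_def using delta_pos by simp
  then show False
    using stage1_le[OF x'] by simp
qed

lemma stage2_point_of_feas:
  assumes x: "(p, d, q, e) \<in> feas"
  obtains y where "y \<in> stage2_feas T D Pmax Elo Ehi eta e1 pstar estar"
    and "stage2_obj T c lam y \<le> stage2_obj T c lam (d, q, e) + kappa_threshold * (p - pstar)"
proof -
  obtain d' q' e' where x': "(pstar, d', q', e') \<in> feas"
    and cost: "stage2_obj T c lam (d', q', e') \<le> stage2_obj T c lam (d, q, e) + kappa_threshold * (p - pstar)"
    using feas_lower_peak[OF x stage1_feas stage1_peak_le[OF x]] by blast
  have "(d', q', e') \<in> stage2_feas T D Pmax Elo Ehi eta e1 pstar estar"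
    unfolding stage2_feas_def using x' stage1_soc_le[OF x'] by auto
  then show ?thesis
    using cost that by blast
qed

lemma ex_stage2_min: "\<exists>y. is_min (stage2_feas T D Pmax Elo Ehi eta e1 pstar estar) (stage2_obj T c lam) y"
proof (rule ex_is_min_stage2)
  show "stage2_feas T D Pmax Elo Ehi eta e1 pstar estar \<noteq> {}"
    using stage1_feas unfolding stage2_feas_def by auto
qed

lemma combined_min_peak:
  assumes "kappa_threshold < kappa" and min: "is_min feas (combined_obj T c lam D kappa) x"
  shows "fst x = pstar"
proof -
  obtain p d q e where x: "x = (p, d, q, e)"
    by (cases x)
  have xf: "(p, d, q, e) \<in> feas"
    using min x by (simp add: is_min_def)
  obtain d' q' e' where y: "(d', q', e') \<in> stage2_feas T D Pmax Elo Ehi eta e1 pstar estar"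
    and cost: "stage2_obj T c lam (d', q', e') \<le> stage2_obj T c lam (d, q, e) + kappa_threshold * (p - pstar)"
    by (rule stage2_point_of_feas[OF xf]) auto
  have "(pstar, d', q', e') \<in> feas"
    using y by (simp add: stage2_feas_def)
  then have "combined_obj T c lam D kappa (p, d, q, e) \<le> combined_obj T c lam D kappa (pstar, d', q', e')"
    using min x by (simp add: is_min_def)
  then have "(kappa - kappa_threshold) * (p - pstar) \<le> 0"
    using cost by (simp add: combined_obj_split algebra_simps)
  then have "p \<le> pstar"
    using assms(1) by (simp add: mult_le_0_iff)
  then show ?thesis
    using stage1_peak_le[OF xf] x by simp
qed

lemma combined_min_of_stage2_min:
  assumes "kappa_threshold \<le> kappa"
    and min2: "is_min (stage2_feas T D Pmax Elo Ehi eta e1 pstar estar) (stage2_obj T c lam) (d, q, e)"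
  shows "is_min feas (combined_obj T c lam D kappa) (pstar, d, q, e)"
  unfolding is_min_def
proof (intro conjI ballI)
  show "(pstar, d, q, e) \<in> feas"
    using min2 by (simp add: is_min_def stage2_feas_def)
  fix x assume "x \<in> feas"
  then obtain p d' q' e' where x: "x = (p, d', q', e')" and xf: "(p, d', q', e') \<in> feas"
    by (cases x) auto
  obtain y where y: "y \<in> stage2_feas T D Pmax Elo Ehi eta e1 pstar estar"
    and cost: "stage2_obj T c lam y \<le> stage2_obj T c lam (d', q', e') + kappa_threshold * (p - pstar)"
    by (rule stage2_point_of_feas[OF xf])
  have "stage2_obj T c lam (d, q, e) \<le> stage2_obj T c lam y"
    using min2 y by (simp add: is_min_def)
  moreover have "kappa_threshold * (p - pstar) \<le> kappa * (p - pstar)"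
    using assms(1) stage1_peak_le[OF xf] by (intro mult_right_mono) auto
  ultimately show "combined_obj T c lam D kappa (pstar, d, q, e) \<le> combined_obj T c lam D kappa x"
    using cost unfolding x combined_obj_split by (simp add: algebra_simps)
qed

lemma two_stage_decomposition:
  assumes "kappa_threshold < kappa"
  shows "(\<forall>x. is_min feas (combined_obj T c lam D kappa) x \<longrightarrow> fst x = pstar) \<and>
    (\<exists>y. is_min (stage2_feas T D Pmax Elo Ehi eta e1 pstar estar) (stage2_obj T c lam) y) \<and>
    (\<forall>d q e. is_min (stage2_feas T D Pmax Elo Ehi eta e1 pstar estar) (stage2_obj T c lam) (d, q, e)
      \<longrightarrow> is_min feas (combined_obj T c lam D kappa) (pstar, d, q, e) \<and>
        combined_obj T c lam D kappa (pstar, d, q, e)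
          = (\<Sum>t = 1..T. lam t * D t) + kappa * pstar + stage2_obj T c lam (d, q, e))"
  using combined_min_peak[OF assms] ex_stage2_min combined_min_of_stage2_min assms
  by (simp add: combined_obj_split)

end

theorem proposition1:
  fixes T :: nat and D lam :: "nat \<Rightarrow> real" and c Pmax Elo Ehi eta e1 :: real
  assumes lam_nonneg: "\<forall>t\<in>{1..T}. lam t \<ge> 0"
    and c_nonneg: "c \<ge> 0"
    and Pmax_pos: "Pmax > 0"
    and E_bounds: "0 \<le> Elo" "Elo \<le> Ehi"
    and eta_bounds: "0 < eta" "eta \<le> 1"
    and e1_bounds: "Elo \<le> e1" "e1 \<le> Ehi"
    and S_nonempty: "feasS T D Pmax Elo Ehi eta e1 \<noteq> {}"
  shows "\<exists>delta0 > 0. \<exists>K. \<forall>delta kappa pstar dstar qstar estar.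
           0 < delta \<longrightarrow> delta < delta0 \<longrightarrow> 0 < kappa \<longrightarrow> K < kappa \<longrightarrow>
           is_min (feasS T D Pmax Elo Ehi eta e1) (stage1_obj T delta) (pstar, dstar, qstar, estar) \<longrightarrow>
           (\<forall>x. is_min (feasS T D Pmax Elo Ehi eta e1) (combined_obj T c lam D kappa) x
                  \<longrightarrow> fst x = pstar) \<and>
           (\<exists>y. is_min (stage2_feas T D Pmax Elo Ehi eta e1 pstar estar) (stage2_obj T c lam) y) \<and>
           (\<forall>d q e. is_min (stage2_feas T D Pmax Elo Ehi eta e1 pstar estar) (stage2_obj T c lam) (d, q, e)
              \<longrightarrow> is_min (feasS T D Pmax Elo Ehi eta e1) (combined_obj T c lam D kappa) (pstar, d, q, e)
                 \<and> combined_obj T c lam D kappa (pstar, d, q, e)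
                     = (\<Sum>t = 1..T. lam t * D t) + kappa * pstar + stage2_obj T c lam (d, q, e))"
proof -
  interpret battery T D lam c Pmax Elo Ehi eta e1
    using assms by unfold_locales auto
  have two_stage: "two_stage T D lam c Pmax Elo Ehi eta e1 delta pstar dstar qstar estar"
    if "0 < delta" "delta < eta / ((real T)\<^sup>2 + 1)"
      and "is_min (feasS T D Pmax Elo Ehi eta e1) (stage1_obj T delta) (pstar, dstar, qstar, estar)"
    for delta pstar dstar qstar estar
    using that by unfold_locales (simp_all add: less_divide_eq add_pos_nonneg algebra_simps)
  have delta0_pos: "0 < eta / ((real T)\<^sup>2 + 1)"
    by (intro divide_pos_pos eta_bounds(1) add_nonneg_pos) simp_all
  show ?thesis
    by (rule exI[of _ "eta / ((real T)\<^sup>2 + 1)"], rule conjI[OF delta0_pos],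
        rule exI[of _ kappa_threshold], intro allI impI,
        rule two_stage.two_stage_decomposition[OF two_stage])
qed

end
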